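(* For all integers $k_1,k_2,n_3$, the following identity holds in $\mathcal{F}$: $$R_{12}^{-1,k_2+1,n_3}+A^{2}R_{12}^{0,k_2,n_3-1}+A^2R_{12}^{0,k_2,n_3+1}+A^{4}R_{12}^{1,k_2-1,n_3}=0.$$
   Context: $\mathcal{F}$ is the free $\mathbb{Z}[A^{\pm1}]$-module with basis the symbols $s_1^{l_1}s_2^{l_2}s_3^{l_3}$, $l_i\ge 0$, extended multilinearly to integer exponents by $s_i^{-1}=0$ and $s_i^{n}=-s_i^{-n-2}$ for $n\le -2$. For $n_i\in\mathbb{Z}$, $R_{12}(n_1,n_2,n_3)=-A^{-n_1-n_2-2}s_1^{n_1}s_2^{n_2}s_3^{n_3}-A^{-n_1-n_2+2}s_1^{n_1-2}s_2^{n_2-2}s_3^{n_3}-A^{-n_1-n_2}s_1^{n_1-1}s_2^{n_2-1}s_3^{n_3+1}-A^{-n_1-n_2}s_1^{n_1-1}s_2^{n_2-1}s_3^{n_3-1}$, and $R_{12}^{n_1,n_2,n_3}=R_{12}(n_1,n_2,n_3)-R_{12}(-n_1+k_1,-n_2+k_2,n_3)$. *)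

theory Defs
  imports Main "HOL-Library.Function_Algebras"
begin

text \<open>Elements of the free Z[A^{+-1}]-module F with basis s1^l1 s2^l2 s3^l3 (l_i >= 0)
  are represented by their coefficient functions: x (l1,l2,l3) j is the coefficient
  of A^j s1^l1 s2^l2 s3^l3.  (The free module embeds into this function space;
  addition / negation / zero are pointwise.)\<close>
type_synonym F = "nat \<times> nat \<times> nat \<Rightarrow> int \<Rightarrow> int"

definition Amul :: "int \<Rightarrow> F \<Rightarrow> F" where
  "Amul m x = (\<lambda>b j. x b (j - m))"

text \<open>Extension of s^n to integer n: s^n for n >= 0 is the basis exponent,
  s^{-1} = 0, s^n = - s^{-n-2} for n <= -2.  Returns (sign coefficient, exponent).\<close>
definition sext :: "int \<Rightarrow> int \<times> nat" where
  "sext n = (if n \<ge> 0 then (1, nat n) else if n = -1 then (0, 0) else (-1, nat (-n-2)))"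

text \<open>smon m n1 n2 n3 = A^m s1^n1 s2^n2 s3^n3, extended multilinearly.\<close>
definition smon :: "int \<Rightarrow> int \<Rightarrow> int \<Rightarrow> int \<Rightarrow> F" where
  "smon m n1 n2 n3 = (\<lambda>b j.
     if b = (snd (sext n1), snd (sext n2), snd (sext n3)) \<and> j = m
     then fst (sext n1) * fst (sext n2) * fst (sext n3) else 0)"

definition R12 :: "int \<Rightarrow> int \<Rightarrow> int \<Rightarrow> F" where
  "R12 n1 n2 n3 =
     - smon (-n1-n2-2) n1 n2 n3
     - smon (-n1-n2+2) (n1-2) (n2-2) n3
     - smon (-n1-n2) (n1-1) (n2-1) (n3+1)
     - smon (-n1-n2) (n1-1) (n2-1) (n3-1)"

definition R12sup :: "int \<Rightarrow> int \<Rightarrow> int \<Rightarrow> int \<Rightarrow> int \<Rightarrow> F" where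
  "R12sup k1 k2 n1 n2 n3 = R12 n1 n2 n3 - R12 (-n1+k1) (-n2+k2) n3"

end

theory Submission
  imports Defs
begin

text \<open>The left-hand side splits into the unreflected terms R12(n1,n2,n3) and the reflected
  terms R12(k1-n1,k2-n2,n3).  The unreflected ones form the chain
  R12(-1,k2+1,n3) + A^2 R12(0,k2,n3-1) + A^2 R12(0,k2,n3+1) + A^4 R12(1,k2-1,n3),
  which vanishes: after rewriting s1^{-1} = 0 and s1^{-n} = -s1^{n-2}, its monomials cancel
  in pairs.  The reflected ones form the same chain with s1 and s2 interchanged (and k1 in
  place of k2), so they vanish as well.\<close>

lemma Amul_smon [simp]: "Amul k (smon m a b c) = smon (m + k) a b c"
  unfolding Amul_def smon_def by (intro ext) auto

lemma Amul_add [simp]: "Amul k (x + y) = Amul k x + Amul k y"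
  unfolding Amul_def by (intro ext) simp

lemma Amul_diff [simp]: "Amul k (x - y) = Amul k x - Amul k y"
  unfolding Amul_def by (intro ext) simp

lemma Amul_uminus [simp]: "Amul k (- x) = - Amul k x"
  unfolding Amul_def by (intro ext) simp

lemma smon_first_minus_one [simp]: "smon m (-1) b c = 0"
  unfolding smon_def sext_def by (intro ext) auto

lemma smon_first_reflect [simp]: "a \<le> -2 \<Longrightarrow> smon m a b c = - smon m (-a-2) b c"
  unfolding smon_def sext_def by (intro ext) auto

definition swap12 :: "F \<Rightarrow> F" where
  "swap12 x = (\<lambda>(l1, l2, l3). x (l2, l1, l3))"

lemma swap12_smon: "swap12 (smon m a b c) = smon m b a c"
  unfolding swap12_def smon_def by (auto simp: fun_eq_iff mult.commute)

lemma swap12_add [simp]: "swap12 (x + y) = swap12 x + swap12 y"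
  unfolding swap12_def by (intro ext) auto

lemma swap12_diff [simp]: "swap12 (x - y) = swap12 x - swap12 y"
  unfolding swap12_def by (intro ext) auto

lemma swap12_uminus [simp]: "swap12 (- x) = - swap12 x"
  unfolding swap12_def by (intro ext) auto

lemma swap12_zero [simp]: "swap12 0 = 0"
  unfolding swap12_def by (intro ext) auto

lemma swap12_Amul [simp]: "swap12 (Amul k x) = Amul k (swap12 x)"
  unfolding swap12_def Amul_def by (intro ext) auto

lemma swap12_R12 [simp]: "swap12 (R12 n1 n2 n3) = R12 n2 n1 n3"
  unfolding R12_def diff_conv_add_uminus swap12_add swap12_uminus swap12_smon
  by (simp only: add.commute[of "- n1" "- n2"])

definition R12_chain :: "int \<Rightarrow> int \<Rightarrow> int \<Rightarrow> F" where
  "R12_chain n1 n2 n3 =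
     R12 (n1 - 1) (n2 + 1) n3 + Amul 2 (R12 n1 n2 (n3 - 1))
     + Amul 2 (R12 n1 n2 (n3 + 1)) + Amul 4 (R12 (n1 + 1) (n2 - 1) n3)"

lemma R12_chain_first_zero: "R12_chain 0 n2 n3 = 0"
proof -
  have left: "R12 (-1) (n2 + 1) n3 =
      smon (2 - n2) 1 (n2 - 1) n3 + smon (-n2) 0 n2 (n3 + 1) + smon (-n2) 0 n2 (n3 - 1)"
    unfolding R12_def by simp
  have middle: "Amul 2 (R12 0 n2 n) = - smon (-n2) 0 n2 n + smon (4 - n2) 0 (n2 - 2) n" for n
    unfolding R12_def by simp
  have right: "Amul 4 (R12 1 (n2 - 1) n3) =
      - smon (2 - n2) 1 (n2 - 1) n3 - smon (4 - n2) 0 (n2 - 2) (n3 + 1)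
      - smon (4 - n2) 0 (n2 - 2) (n3 - 1)"
    unfolding R12_def by simp
  have "R12_chain 0 n2 n3 = R12 (-1) (n2 + 1) n3 + Amul 2 (R12 0 n2 (n3 - 1))
      + Amul 2 (R12 0 n2 (n3 + 1)) + Amul 4 (R12 1 (n2 - 1) n3)"
    by (simp add: R12_chain_def)
  also have "\<dots> = 0"
    unfolding left middle right by (simp add: algebra_simps)
  finally show ?thesis .
qed

theorem lemma3p6:
  fixes k1 k2 n3 :: int
  shows "R12sup k1 k2 (-1) (k2+1) n3 + Amul 2 (R12sup k1 k2 0 k2 (n3-1))
       + Amul 2 (R12sup k1 k2 0 k2 (n3+1)) + Amul 4 (R12sup k1 k2 1 (k2-1) n3) = 0"
proof -
  have "R12sup k1 k2 (-1) (k2+1) n3 + Amul 2 (R12sup k1 k2 0 k2 (n3-1))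
       + Amul 2 (R12sup k1 k2 0 k2 (n3+1)) + Amul 4 (R12sup k1 k2 1 (k2-1) n3)
      = R12_chain 0 k2 n3 - swap12 (R12_chain 0 k1 n3)"
    unfolding R12sup_def R12_chain_def by (simp add: algebra_simps)
  then show ?thesis
    by (simp add: R12_chain_first_zero)
qed

end
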